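(* For any $\theta_0=(\gamma_0,\mu_0,\sigma_0)\in(-1/2,\infty)\times\mathbb{R}\times(0,\infty)$, the three-parameter GEV family satisfies \[P_{\theta_0}\big(\mathbb{R}\setminus\bar S(\varepsilon)\big)=o(\varepsilon^2),\qquad\varepsilon\downarrow0.\]
   Context: $P_\theta$, $\theta=(\gamma,\mu,\sigma)\in\Theta=\mathbb{R}\times\mathbb{R}\times(0,\infty)$, is the GEV distribution with Lebesgue density $p_\theta(x)=\sigma^{-1}e^{-u}u^{\gamma+1}\mathbf 1(1+\gamma z>0)$, $z=(x-\mu)/\sigma$, $u=(1+\gamma z)^{-1/\gamma}$ for $\gamma\ne0$, $u=e^{-z}$ for $\gamma=0$. Its support is $S_\theta=\{x:\sigma+\gamma(x-\mu)>0\}$. $U_\varepsilon(\theta_0)=\{\theta\in\Theta:\|\theta-\theta_0\|<\varepsilon\}$ and $\bar S(\varepsilon)=\bigcap_{\theta\in U_\varepsilon(\theta_0)}S_\theta$. *)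

theory Defs
  imports "HOL-Analysis.Analysis" "HOL-Library.Landau_Symbols"
begin

text \<open>Parameters theta = (gamma, mu, sigma) :: real \<times> real \<times> real; the norm on this
product type is the Euclidean norm.\<close>

definition gev_param_space :: "(real \<times> real \<times> real) set" where
  "gev_param_space = {(\<gamma>, \<mu>, \<sigma>). \<sigma> > 0}"

definition gev_u :: "real \<times> real \<times> real \<Rightarrow> real \<Rightarrow> real" where
  "gev_u \<theta> x = (case \<theta> of (\<gamma>, \<mu>, \<sigma>) \<Rightarrow>
     (let z = (x - \<mu>) / \<sigma> in
      if \<gamma> = 0 then exp (- z) else (1 + \<gamma> * z) powr (- 1 / \<gamma>)))"

definition gev_density :: "real \<times> real \<times> real \<Rightarrow> real \<Rightarrow> real" where
  "gev_density \<theta> x = (case \<theta> of (\<gamma>, \<mu>, \<sigma>) \<Rightarrow>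
     (let z = (x - \<mu>) / \<sigma>; u = gev_u \<theta> x in
      if 1 + \<gamma> * z > 0 then (1 / \<sigma>) * exp (- u) * u powr (\<gamma> + 1) else 0))"

definition gev_measure :: "real \<times> real \<times> real \<Rightarrow> real measure" where
  "gev_measure \<theta> = density lborel (\<lambda>x. ennreal (gev_density \<theta> x))"

definition gev_support :: "real \<times> real \<times> real \<Rightarrow> real set" where
  "gev_support \<theta> = (case \<theta> of (\<gamma>, \<mu>, \<sigma>) \<Rightarrow> {x. \<sigma> + \<gamma> * (x - \<mu>) > 0})"

definition gev_nbhd :: "real \<times> real \<times> real \<Rightarrow> real \<Rightarrow> (real \<times> real \<times> real) set" where
  "gev_nbhd \<theta>0 \<epsilon> = {\<theta> \<in> gev_param_space. norm (\<theta> - \<theta>0) < \<epsilon>}"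

definition gev_common_support :: "real \<times> real \<times> real \<Rightarrow> real \<Rightarrow> real set" where
  "gev_common_support \<theta>0 \<epsilon> = (\<Inter>\<theta> \<in> gev_nbhd \<theta>0 \<epsilon>. gev_support \<theta>)"

end

theory Submission
  imports Defs "HOL-Real_Asymp.Real_Asymp"
begin

text \<open>
  A point x lies outside every support S_\<theta> with \<theta> \<epsilon>-close to \<theta>0 only if its margin
  \<sigma>0 + \<gamma>0 (x - \<mu>0) inside S_\<theta>0 is O(\<epsilon>) (for \<gamma>0 = 0: only if |x - \<mu>0| is of
  order 1/\<epsilon>). For \<gamma>0 \<noteq> 0 this confines the exceptional set to an interval of length
  O(\<epsilon>) at the endpoint of the support, where the density is O(margin^q): with
  q = -(\<gamma>0 + 1)/\<gamma>0 for \<gamma>0 < 0, and with q = 3 for \<gamma>0 > 0 because the density vanishes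
  faster than any power there. The mass is then O(\<epsilon>^(q+1)), and q > 1 exactly when
  \<gamma>0 > -1/2. For \<gamma>0 = 0 the exponential tails of the Gumbel density give
  O(exp(-1/(2\<epsilon>))).
\<close>

definition mass_outside_common_support :: "real \<times> real \<times> real \<Rightarrow> real \<Rightarrow> real" where
  "mass_outside_common_support \<theta>0 \<epsilon> =
     measure (gev_measure \<theta>0) (UNIV - gev_common_support \<theta>0 \<epsilon>)"

lemma smallo_of_eventually_le:
  fixes f h :: "'a \<Rightarrow> real"
  assumes "eventually (\<lambda>x. norm (f x) \<le> K * h x) F" and "h \<in> o[F](g)"
  shows "f \<in> o[F](g)"
proof -
  have "f \<in> O[F](h)"
  proof (rule bigoI[where c = "\<bar>K\<bar>"])
    show "eventually (\<lambda>x. norm (f x) \<le> \<bar>K\<bar> * norm (h x)) F"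
      using assms(1)
    proof eventually_elim
      case (elim x)
      have "K * h x \<le> \<bar>K\<bar> * \<bar>h x\<bar>" by (metis abs_ge_self abs_mult)
      then show ?case using elim by simp
    qed
  qed
  then show ?thesis using assms(2) by (rule landau_o.big_small_trans)
qed

lemma power_div_fact_le_exp:
  fixes u :: real
  assumes "0 \<le> u"
  shows "u ^ n / fact n \<le> exp u"
proof -
  have s: "(\<lambda>k. u ^ k /\<^sub>R fact k) sums exp u" by (rule exp_converges)
  have "(\<Sum>k\<in>{n}. u ^ k /\<^sub>R fact k) \<le> (\<Sum>k. u ^ k /\<^sub>R fact k)"
    by (rule sum_le_suminf) (use s assms in \<open>auto simp: sums_summable\<close>)
  also have "\<dots> = exp u" using s sums_unique by metis
  finally show ?thesis by (simp add: divide_inverse mult.commute)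
qed

lemma powr_le_fact_ceiling_mult_exp:
  fixes u c :: real
  assumes "0 < u" and "0 \<le> c"
  shows "u powr c \<le> fact (nat \<lceil>c\<rceil>) * exp u"
proof (cases "u \<le> 1")
  case True
  then have "u powr c \<le> 1" using assms by (simp add: powr_le1)
  also have "1 \<le> exp u" using assms by simp
  also have "exp u \<le> fact (nat \<lceil>c\<rceil>) * exp u" by simp
  finally show ?thesis .
next
  case False
  have "u powr c \<le> u powr real (nat \<lceil>c\<rceil>)"
    using False assms by (intro powr_mono) linarith+
  also have "\<dots> = u ^ nat \<lceil>c\<rceil>" using assms(1) by (rule powr_realpow)
  also have "\<dots> \<le> fact (nat \<lceil>c\<rceil>) * exp u"
    using power_div_fact_le_exp[of u "nat \<lceil>c\<rceil>"] assms by (simp add: divide_le_eq mult.commute)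
  finally show ?thesis .
qed

lemma nn_integral_exp_neg_abs_le:
  fixes a m :: real
  assumes "0 < a"
  shows "(\<integral>\<^sup>+x. ennreal (exp (- a * \<bar>x - m\<bar>)) \<partial>lborel) \<le> ennreal (2 / a)"
proof -
  define g where "g x = indicator {0..} x * exp (- a * x)" for x :: real
  have [measurable]: "g \<in> borel_measurable borel" unfolding g_def by measurable
  have "g = (\<lambda>x. if x \<in> {0..} then exp (- a * x) else 0)"
    by (auto simp: g_def indicator_def fun_eq_iff)
  then have "(g has_integral 1 / a) UNIV"
    using has_integral_exp_minus_to_infinity[OF assms, of 0]
    by (simp only: has_integral_restrict_UNIV) simp
  then have right: "(\<integral>\<^sup>+x. ennreal (g x) \<partial>lborel) = ennreal (1 / a)"
    by (rule nn_integral_has_integral_lborel[rotated 2]) (auto simp: g_def)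
  have left: "(\<integral>\<^sup>+x. ennreal (g (- x)) \<partial>lborel) = ennreal (1 / a)"
    using nn_integral_real_affine[of "\<lambda>x. ennreal (g x)" "-1" 0] right by simp
  have "(\<integral>\<^sup>+x. ennreal (exp (- a * \<bar>x - m\<bar>)) \<partial>lborel)
      = (\<integral>\<^sup>+x. ennreal (exp (- a * \<bar>x\<bar>)) \<partial>lborel)"
    using nn_integral_real_affine[of "\<lambda>x. ennreal (exp (- a * \<bar>x - m\<bar>))" 1 m] by simp
  also have "\<dots> \<le> (\<integral>\<^sup>+x. ennreal (g x) + ennreal (g (- x)) \<partial>lborel)"
    by (intro nn_integral_mono)
      (auto simp: g_def indicator_def ennreal_plus[symmetric] simp del: ennreal_plus intro!: ennreal_leI)
  also have "\<dots> = ennreal (1 / a) + ennreal (1 / a)"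
    by (subst nn_integral_add) (auto simp: right left)
  also have "\<dots> = ennreal (2 / a)"
    using assms by (simp add: ennreal_plus[symmetric] del: ennreal_plus)
  finally show ?thesis .
qed

lemma measure_density_le:
  fixes f g :: "real \<Rightarrow> real"
  assumes [measurable]: "f \<in> borel_measurable borel" and "A \<subseteq> B" and [measurable]: "B \<in> sets borel"
    and "\<And>x. x \<in> B \<Longrightarrow> f x \<le> g x"
    and "(\<integral>\<^sup>+x. ennreal (g x) \<partial>lborel) \<le> ennreal r" and "0 \<le> r"
  shows "measure (density lborel (\<lambda>x. ennreal (f x))) A \<le> r"
proof -
  let ?M = "density lborel (\<lambda>x. ennreal (f x))"
  have "emeasure ?M A \<le> emeasure ?M B"
    using assms(2,3) by (intro emeasure_mono) simp_all
  also have "\<dots> = (\<integral>\<^sup>+x. ennreal (f x) * indicator B x \<partial>lborel)"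
    by (simp add: emeasure_density)
  also have "\<dots> \<le> (\<integral>\<^sup>+x. ennreal (g x) \<partial>lborel)"
    using assms(4) by (intro nn_integral_mono) (auto simp: indicator_def intro: ennreal_leI)
  finally have "emeasure ?M A \<le> ennreal r" using assms(5) by (rule order_trans)
  then show ?thesis unfolding measure_def using assms(6) by (simp add: enn2real_leI)
qed

lemma margin_le_of_not_mem_gev_common_support:
  fixes \<gamma>0 \<mu>0 \<sigma>0 x \<epsilon> :: real
  assumes "x \<notin> gev_common_support (\<gamma>0, \<mu>0, \<sigma>0) \<epsilon>" and "\<epsilon> \<le> 1"
  shows "\<sigma>0 + \<gamma>0 * (x - \<mu>0) \<le> \<epsilon> * (2 + \<bar>\<gamma>0\<bar> + \<bar>x - \<mu>0\<bar>)"
proof -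
  obtain \<gamma> \<mu> \<sigma> where close: "norm (\<gamma> - \<gamma>0, \<mu> - \<mu>0, \<sigma> - \<sigma>0) < \<epsilon>"
    and outside: "\<sigma> + \<gamma> * (x - \<mu>) \<le> 0"
    using assms(1) unfolding gev_common_support_def gev_nbhd_def gev_support_def by auto
  have \<gamma>: "\<bar>\<gamma> - \<gamma>0\<bar> < \<epsilon>"
    using norm_fst_le[of "\<gamma> - \<gamma>0" "(\<mu> - \<mu>0, \<sigma> - \<sigma>0)"] close by simp
  have \<mu>: "\<bar>\<mu> - \<mu>0\<bar> < \<epsilon>"
    using norm_snd_le[of "(\<mu> - \<mu>0, \<sigma> - \<sigma>0)" "\<gamma> - \<gamma>0"] norm_fst_le[of "\<mu> - \<mu>0" "\<sigma> - \<sigma>0"] close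
    by simp
  have \<sigma>: "\<bar>\<sigma> - \<sigma>0\<bar> < \<epsilon>"
    using norm_snd_le[of "(\<mu> - \<mu>0, \<sigma> - \<sigma>0)" "\<gamma> - \<gamma>0"] norm_snd_le[of "\<sigma> - \<sigma>0" "\<mu> - \<mu>0"] close
    by simp
  have "\<sigma> + \<gamma> * (x - \<mu>) =
      \<sigma>0 + \<gamma>0 * (x - \<mu>0) + (\<sigma> - \<sigma>0) + (\<gamma> - \<gamma>0) * (x - \<mu>0) - \<gamma> * (\<mu> - \<mu>0)"
    by (simp add: algebra_simps)
  moreover have "\<bar>(\<gamma> - \<gamma>0) * (x - \<mu>0)\<bar> \<le> \<epsilon> * \<bar>x - \<mu>0\<bar>"
    using \<gamma> by (simp add: abs_mult mult_right_mono)
  moreover have "\<bar>\<gamma> * (\<mu> - \<mu>0)\<bar> \<le> (\<bar>\<gamma>0\<bar> + 1) * \<epsilon>"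
    unfolding abs_mult using \<gamma> \<mu> assms(2) by (intro mult_mono) auto
  ultimately show ?thesis
    using outside \<sigma> by (simp add: algebra_simps)
qed

lemma margin_le_of_not_mem_gev_common_support_nonzero:
  fixes \<gamma>0 \<mu>0 \<sigma>0 x \<epsilon> :: real
  assumes "\<gamma>0 \<noteq> 0" and "0 < \<sigma>0" and "x \<notin> gev_common_support (\<gamma>0, \<mu>0, \<sigma>0) \<epsilon>"
    and "0 < \<epsilon>" and "\<epsilon> \<le> 1" and "\<epsilon> \<le> \<bar>\<gamma>0\<bar> / 2"
  shows "\<sigma>0 + \<gamma>0 * (x - \<mu>0) \<le> 2 * (2 + \<bar>\<gamma>0\<bar> + \<sigma>0 / \<bar>\<gamma>0\<bar>) * \<epsilon>"
proof (cases "\<sigma>0 + \<gamma>0 * (x - \<mu>0) \<le> 0")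
  case True
  moreover have "0 \<le> 2 * (2 + \<bar>\<gamma>0\<bar> + \<sigma>0 / \<bar>\<gamma>0\<bar>) * \<epsilon>" using assms(2,4) by simp
  ultimately show ?thesis by linarith
next
  case False
  define w t where "w = \<sigma>0 + \<gamma>0 * (x - \<mu>0)" and "t = x - \<mu>0"
  have \<gamma>0: "0 < \<bar>\<gamma>0\<bar>" using assms(1) by simp
  have margin: "w \<le> \<epsilon> * (2 + \<bar>\<gamma>0\<bar>) + \<epsilon> * \<bar>t\<bar>"
    using margin_le_of_not_mem_gev_common_support[OF assms(3,5)] unfolding w_def t_def
    by (simp add: algebra_simps)
  have "\<gamma>0 * t = w - \<sigma>0" unfolding w_def t_def by simp
  then have "\<bar>\<gamma>0\<bar> * \<bar>t\<bar> = \<bar>w - \<sigma>0\<bar>" by (simp add: abs_mult[symmetric])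
  also have "\<dots> \<le> w + \<sigma>0" using False assms(2) unfolding w_def by linarith
  finally have distance: "\<bar>\<gamma>0\<bar> * \<bar>t\<bar> \<le> w + \<sigma>0" .
  have "\<bar>\<gamma>0\<bar> * w \<le> \<bar>\<gamma>0\<bar> * (\<epsilon> * (2 + \<bar>\<gamma>0\<bar>)) + \<epsilon> * (\<bar>\<gamma>0\<bar> * \<bar>t\<bar>)"
    using mult_left_mono[OF margin, of "\<bar>\<gamma>0\<bar>"] by (simp add: algebra_simps)
  also have "\<epsilon> * (\<bar>\<gamma>0\<bar> * \<bar>t\<bar>) \<le> \<epsilon> * (w + \<sigma>0)"
    using distance assms(4) by (simp add: mult_left_mono)
  also have "\<epsilon> * (w + \<sigma>0) \<le> \<bar>\<gamma>0\<bar> / 2 * w + \<epsilon> * \<sigma>0"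
    using False mult_right_mono[OF assms(6), of w] unfolding w_def[symmetric] by (simp add: algebra_simps)
  finally have "\<bar>\<gamma>0\<bar> * w \<le> \<bar>\<gamma>0\<bar> * (2 * \<epsilon> * (2 + \<bar>\<gamma>0\<bar>)) + 2 * \<epsilon> * \<sigma>0"
    by (simp add: algebra_simps)
  then have "w \<le> 2 * \<epsilon> * (2 + \<bar>\<gamma>0\<bar>) + 2 * \<epsilon> * \<sigma>0 / \<bar>\<gamma>0\<bar>"
    using \<gamma>0 by (simp add: field_simps)
  then show ?thesis unfolding w_def by (simp add: algebra_simps)
qed

lemma gev_density_measurable [measurable]: "gev_density (\<gamma>, \<mu>, \<sigma>) \<in> borel_measurable borel"
  unfolding gev_density_def gev_u_def Let_def by measurable

lemma gev_density_outside_support: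
  fixes \<gamma> \<mu> \<sigma> x :: real
  assumes "0 < \<sigma>" and "\<sigma> + \<gamma> * (x - \<mu>) \<le> 0"
  shows "gev_density (\<gamma>, \<mu>, \<sigma>) x = 0"
proof -
  have "1 + \<gamma> * ((x - \<mu>) / \<sigma>) = (\<sigma> + \<gamma> * (x - \<mu>)) / \<sigma>"
    using assms(1) by (simp add: field_simps)
  moreover have "\<not> 0 < (\<sigma> + \<gamma> * (x - \<mu>)) / \<sigma>"
    using assms by (simp add: divide_nonpos_pos not_less)
  ultimately show ?thesis by (simp add: gev_density_def Let_def)
qed

lemma gev_density_nonzero_shape:
  fixes \<gamma> \<mu> \<sigma> x u :: real
  assumes "\<gamma> \<noteq> 0" and "0 < \<sigma>" and "0 < \<sigma> + \<gamma> * (x - \<mu>)"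
    and "u = ((\<sigma> + \<gamma> * (x - \<mu>)) / \<sigma>) powr (- 1 / \<gamma>)"
  shows "gev_density (\<gamma>, \<mu>, \<sigma>) x = exp (- u) * u powr (\<gamma> + 1) / \<sigma>"
proof -
  have "1 + \<gamma> * ((x - \<mu>) / \<sigma>) = (\<sigma> + \<gamma> * (x - \<mu>)) / \<sigma>"
    using assms(2) by (simp add: field_simps)
  then show ?thesis
    using assms by (simp add: gev_density_def gev_u_def Let_def)
qed

lemma gev_density_gumbel:
  fixes \<mu> \<sigma> x :: real
  shows "gev_density (0, \<mu>, \<sigma>) x = exp (- exp (- ((x - \<mu>) / \<sigma>))) * exp (- ((x - \<mu>) / \<sigma>)) / \<sigma>"
  by (simp add: gev_density_def gev_u_def Let_def)

lemma gev_density_le_neg_shape: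
  fixes \<gamma> \<mu> \<sigma> x :: real
  assumes "\<gamma> < 0" and "0 < \<sigma>" and "0 < \<sigma> + \<gamma> * (x - \<mu>)"
  shows "gev_density (\<gamma>, \<mu>, \<sigma>) x \<le> 1 / \<sigma> * ((\<sigma> + \<gamma> * (x - \<mu>)) / \<sigma>) powr (- (\<gamma> + 1) / \<gamma>)"
proof -
  define v where "v = (\<sigma> + \<gamma> * (x - \<mu>)) / \<sigma>"
  define u where "u = v powr (- 1 / \<gamma>)"
  have "- 1 / \<gamma> * (\<gamma> + 1) = - (\<gamma> + 1) / \<gamma>" using assms(1) by (simp add: field_simps)
  then have "u powr (\<gamma> + 1) = v powr (- (\<gamma> + 1) / \<gamma>)" unfolding u_def powr_powr by simp
  moreover have "gev_density (\<gamma>, \<mu>, \<sigma>) x = exp (- u) * u powr (\<gamma> + 1) / \<sigma>"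
    using assms unfolding u_def v_def by (intro gev_density_nonzero_shape) auto
  moreover have "exp (- u) * u powr (\<gamma> + 1) \<le> u powr (\<gamma> + 1)"
    unfolding u_def by (simp add: mult_left_le_one_le)
  ultimately show ?thesis
    using assms(2) unfolding v_def by (simp add: divide_right_mono)
qed

text \<open>Near the endpoint of the support u tends to \<infinity>; u^(4\<gamma>+1) \<le> M e^u turns u^(\<gamma>+1) e^-u
  into M u^(-3\<gamma>), the cube of the scaled margin. Any exponent above 1 in place of 3 would do.\<close>
lemma gev_density_le_pos_shape:
  fixes \<gamma> \<mu> \<sigma> x :: real
  assumes "0 < \<gamma>" and "0 < \<sigma>" and "0 < \<sigma> + \<gamma> * (x - \<mu>)"
  shows "gev_density (\<gamma>, \<mu>, \<sigma>) x \<le> fact (nat \<lceil>4 * \<gamma> + 1\<rceil>) / \<sigma> * ((\<sigma> + \<gamma> * (x - \<mu>)) / \<sigma>) powr 3"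
proof -
  define v where "v = (\<sigma> + \<gamma> * (x - \<mu>)) / \<sigma>"
  define u where "u = v powr (- 1 / \<gamma>)"
  define M :: real where "M = fact (nat \<lceil>4 * \<gamma> + 1\<rceil>)"
  have "0 < v" using assms(2,3) unfolding v_def by simp
  then have "0 < u" unfolding u_def by simp
  have "u powr (\<gamma> + 1) = u powr (4 * \<gamma> + 1) * u powr (- 3 * \<gamma>)"
    by (simp add: powr_add[symmetric])
  also have "u powr (- 3 * \<gamma>) = v powr 3"
    using assms(1) unfolding u_def by (simp add: powr_powr)
  finally have split: "u powr (\<gamma> + 1) = u powr (4 * \<gamma> + 1) * v powr 3" .
  have "exp (- u) * u powr (4 * \<gamma> + 1) \<le> exp (- u) * (M * exp u)"
    using powr_le_fact_ceiling_mult_exp[OF \<open>0 < u\<close>, of "4 * \<gamma> + 1"] assms(1)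
    unfolding M_def by (intro mult_left_mono) auto
  also have "\<dots> = M" by (simp add: exp_minus field_simps)
  finally have bound: "exp (- u) * u powr (\<gamma> + 1) \<le> M * v powr 3"
    unfolding split mult.assoc[symmetric] by (intro mult_right_mono) auto
  have "gev_density (\<gamma>, \<mu>, \<sigma>) x = exp (- u) * u powr (\<gamma> + 1) / \<sigma>"
    using assms unfolding u_def v_def by (intro gev_density_nonzero_shape) auto
  also have "\<dots> \<le> M * v powr 3 / \<sigma>"
    using bound assms(2) by (simp add: divide_right_mono)
  also have "\<dots> = M / \<sigma> * v powr 3" by simp
  finally show ?thesis unfolding M_def v_def .
qed

lemma gev_density_gumbel_le:
  fixes \<mu> \<sigma> x :: real
  assumes "0 < \<sigma>"
  shows "gev_density (0, \<mu>, \<sigma>) x \<le> 2 / \<sigma> * exp (- \<bar>x - \<mu>\<bar> / \<sigma>)"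
proof -
  define z where "z = (x - \<mu>) / \<sigma>"
  define u where "u = exp (- z)"
  have "0 < u" unfolding u_def by simp
  have "exp (- u) * u \<le> 2 * exp (- \<bar>z\<bar>)"
  proof (cases "0 \<le> z")
    case True
    have "exp (- u) * u \<le> u" using \<open>0 < u\<close> by (simp add: mult_left_le_one_le)
    moreover have "u \<le> 2 * exp (- \<bar>z\<bar>)" using True unfolding u_def by simp
    ultimately show ?thesis by linarith
  next
    case False
    have "u\<^sup>2 / 2 \<le> exp u" using exp_lower_Taylor_quadratic[of u] \<open>0 < u\<close> by simp
    then have "exp (- u) * u \<le> 2 / u"
      using \<open>0 < u\<close> by (simp add: exp_minus field_simps power2_eq_square)
    also have "2 / u = 2 * exp (- \<bar>z\<bar>)"
      using False unfolding u_def by (simp add: exp_minus field_simps)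
    finally show ?thesis .
  qed
  moreover have "\<bar>z\<bar> = \<bar>x - \<mu>\<bar> / \<sigma>" unfolding z_def using assms by simp
  ultimately show ?thesis
    using assms unfolding gev_density_gumbel z_def u_def by (simp add: divide_right_mono)
qed

lemma gev_density_le_indicator_near_endpoint:
  fixes \<gamma>0 \<mu>0 \<sigma>0 C q \<delta> x :: real
  defines "c \<equiv> \<mu>0 - \<sigma>0 / \<gamma>0" and "L \<equiv> \<delta> / \<bar>\<gamma>0\<bar>"
  assumes "\<gamma>0 \<noteq> 0" and "0 < \<sigma>0" and "0 \<le> q" and "0 \<le> C"
    and density: "\<And>x. 0 < \<sigma>0 + \<gamma>0 * (x - \<mu>0) \<Longrightarrow>
      gev_density (\<gamma>0, \<mu>0, \<sigma>0) x \<le> C * ((\<sigma>0 + \<gamma>0 * (x - \<mu>0)) / \<sigma>0) powr q"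
    and near: "\<sigma>0 + \<gamma>0 * (x - \<mu>0) \<le> \<delta>"
  shows "gev_density (\<gamma>0, \<mu>0, \<sigma>0) x \<le> C * (\<delta> / \<sigma>0) powr q * indicator {c - L..c + L} x"
proof (cases "0 < \<sigma>0 + \<gamma>0 * (x - \<mu>0)")
  case False
  then show ?thesis using gev_density_outside_support[OF assms(4)] assms(6)
    by (simp add: indicator_def)
next
  case True
  have "x - c = (\<sigma>0 + \<gamma>0 * (x - \<mu>0)) / \<gamma>0" unfolding c_def using assms(3) by (simp add: field_simps)
  then have "\<bar>x - c\<bar> = (\<sigma>0 + \<gamma>0 * (x - \<mu>0)) / \<bar>\<gamma>0\<bar>" using True by simp
  also have "\<dots> \<le> L" unfolding L_def using near by (simp add: divide_right_mono)
  finally have "x \<in> {c - L..c + L}" by auto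
  moreover have "C * ((\<sigma>0 + \<gamma>0 * (x - \<mu>0)) / \<sigma>0) powr q \<le> C * (\<delta> / \<sigma>0) powr q"
    using True near assms(4-6) by (intro mult_left_mono powr_mono2 divide_right_mono) auto
  ultimately show ?thesis using density[OF True] by simp
qed

lemma mass_outside_common_support_le_nonzero_shape:
  fixes \<gamma>0 \<mu>0 \<sigma>0 C q \<epsilon> :: real
  defines "D \<equiv> 2 * (2 + \<bar>\<gamma>0\<bar> + \<sigma>0 / \<bar>\<gamma>0\<bar>)"
  assumes "\<gamma>0 \<noteq> 0" and "0 < \<sigma>0" and "0 \<le> q" and "0 \<le> C"
    and density: "\<And>x. 0 < \<sigma>0 + \<gamma>0 * (x - \<mu>0) \<Longrightarrow>
      gev_density (\<gamma>0, \<mu>0, \<sigma>0) x \<le> C * ((\<sigma>0 + \<gamma>0 * (x - \<mu>0)) / \<sigma>0) powr q"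
    and "0 < \<epsilon>" and "\<epsilon> \<le> 1" and "\<epsilon> \<le> \<bar>\<gamma>0\<bar> / 2"
  shows "mass_outside_common_support (\<gamma>0, \<mu>0, \<sigma>0) \<epsilon> \<le> C * (D * \<epsilon> / \<sigma>0) powr q * (2 * D * \<epsilon> / \<bar>\<gamma>0\<bar>)"
proof -
  define H where "H = C * (D * \<epsilon> / \<sigma>0) powr q"
  define c L where "c = \<mu>0 - \<sigma>0 / \<gamma>0" and "L = D * \<epsilon> / \<bar>\<gamma>0\<bar>"
  have "0 < D" unfolding D_def using assms(2,3) by (simp add: add_pos_nonneg)
  then have "0 \<le> H" "0 \<le> L" unfolding H_def L_def using assms(5,7) by simp_all
  let ?B = "{x. \<sigma>0 + \<gamma>0 * (x - \<mu>0) \<le> D * \<epsilon>}"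
  show ?thesis unfolding mass_outside_common_support_def gev_measure_def
  proof (rule measure_density_le[where B = ?B and g = "\<lambda>x. H * indicator {c - L..c + L} x"])
    show "UNIV - gev_common_support (\<gamma>0, \<mu>0, \<sigma>0) \<epsilon> \<subseteq> ?B"
      using margin_le_of_not_mem_gev_common_support_nonzero[OF assms(2,3) _ assms(7-9)]
      unfolding D_def by (auto simp: mult.commute)
    show "gev_density (\<gamma>0, \<mu>0, \<sigma>0) x \<le> H * indicator {c - L..c + L} x" if "x \<in> ?B" for x
      using gev_density_le_indicator_near_endpoint[OF assms(2-5) density] that
      unfolding H_def c_def L_def by simp
  next
    have "(\<integral>\<^sup>+x. ennreal (H * indicator {c - L..c + L} x) \<partial>lborel)
        = (\<integral>\<^sup>+x. ennreal H * indicator {c - L..c + L} x \<partial>lborel)"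
      by (intro nn_integral_cong) (simp add: indicator_def)
    also have "\<dots> = ennreal H * ennreal (2 * L)"
      using \<open>0 \<le> L\<close> by (simp add: nn_integral_cmult_indicator)
    also have "\<dots> = ennreal (C * (D * \<epsilon> / \<sigma>0) powr q * (2 * D * \<epsilon> / \<bar>\<gamma>0\<bar>))"
      using \<open>0 \<le> H\<close> \<open>0 \<le> L\<close> by (simp add: ennreal_mult[symmetric] H_def L_def ac_simps)
    finally show "(\<integral>\<^sup>+x. ennreal (H * indicator {c - L..c + L} x) \<partial>lborel)
        \<le> ennreal (C * (D * \<epsilon> / \<sigma>0) powr q * (2 * D * \<epsilon> / \<bar>\<gamma>0\<bar>))"
      by simp
    show "0 \<le> C * (D * \<epsilon> / \<sigma>0) powr q * (2 * D * \<epsilon> / \<bar>\<gamma>0\<bar>)"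
      using \<open>0 \<le> H\<close> \<open>0 < D\<close> assms(7) unfolding H_def by simp
  qed measurable
qed

lemma mass_outside_common_support_smallo_nonzero_shape:
  fixes \<gamma>0 \<mu>0 \<sigma>0 C q :: real
  assumes "\<gamma>0 \<noteq> 0" and "0 < \<sigma>0" and "1 < q" and "0 \<le> C"
    and "\<And>x. 0 < \<sigma>0 + \<gamma>0 * (x - \<mu>0) \<Longrightarrow>
      gev_density (\<gamma>0, \<mu>0, \<sigma>0) x \<le> C * ((\<sigma>0 + \<gamma>0 * (x - \<mu>0)) / \<sigma>0) powr q"
  shows "mass_outside_common_support (\<gamma>0, \<mu>0, \<sigma>0) \<in> o[at_right 0](\<lambda>\<epsilon>. \<epsilon> ^ 2)"
proof (rule smallo_of_eventually_le)
  define D where "D = 2 * (2 + \<bar>\<gamma>0\<bar> + \<sigma>0 / \<bar>\<gamma>0\<bar>)"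
  show "eventually (\<lambda>\<epsilon>. norm (mass_outside_common_support (\<gamma>0, \<mu>0, \<sigma>0) \<epsilon>)
      \<le> (C * (D / \<sigma>0) powr q * (2 * D / \<bar>\<gamma>0\<bar>)) * \<epsilon> powr (q + 1)) (at_right 0)"
  proof (rule eventually_at_rightI[of 0 "min 1 (\<bar>\<gamma>0\<bar> / 2)"])
    fix \<epsilon> :: real assume "\<epsilon> \<in> {0<..<min 1 (\<bar>\<gamma>0\<bar> / 2)}"
    then have "0 < \<epsilon>" "\<epsilon> \<le> 1" "\<epsilon> \<le> \<bar>\<gamma>0\<bar> / 2" by auto
    have "(D * \<epsilon> / \<sigma>0) powr q = (D / \<sigma>0) powr q * \<epsilon> powr q"
      by (simp add: powr_mult[symmetric])
    moreover have "\<epsilon> powr (q + 1) = \<epsilon> powr q * \<epsilon>" using \<open>0 < \<epsilon>\<close> by (simp add: powr_add)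
    ultimately show "norm (mass_outside_common_support (\<gamma>0, \<mu>0, \<sigma>0) \<epsilon>)
        \<le> (C * (D / \<sigma>0) powr q * (2 * D / \<bar>\<gamma>0\<bar>)) * \<epsilon> powr (q + 1)"
      using mass_outside_common_support_le_nonzero_shape[OF assms(1,2) _ assms(4,5) \<open>0 < \<epsilon>\<close> \<open>\<epsilon> \<le> 1\<close>
          \<open>\<epsilon> \<le> \<bar>\<gamma>0\<bar> / 2\<close>] assms(3)
      by (simp add: mass_outside_common_support_def D_def field_simps)
  qed (use assms(1) in simp)
  show "(\<lambda>\<epsilon>. \<epsilon> powr (q + 1)) \<in> o[at_right 0](\<lambda>\<epsilon>. \<epsilon> ^ 2)"
    using assms(3) by real_asymp
qed

lemma gev_density_gumbel_le_far:
  fixes \<mu> \<sigma> \<epsilon> x :: real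
  assumes "0 < \<sigma>" and "0 < \<epsilon>" and far: "\<sigma> \<le> \<epsilon> * (2 + \<bar>x - \<mu>\<bar>)"
  shows "gev_density (0, \<mu>, \<sigma>) x \<le> 2 / \<sigma> * exp (1 / \<sigma> - 1 / (2 * \<epsilon>)) * exp (- (1 / (2 * \<sigma>)) * \<bar>x - \<mu>\<bar>)"
proof -
  have "\<sigma> / \<epsilon> \<le> 2 + \<bar>x - \<mu>\<bar>"
    using far assms(2) by (simp add: pos_divide_le_eq mult.commute)
  then have "(\<sigma> / \<epsilon> - 2) / (2 * \<sigma>) \<le> \<bar>x - \<mu>\<bar> / (2 * \<sigma>)"
    using assms(1) by (simp add: divide_right_mono)
  moreover have "(\<sigma> / \<epsilon> - 2) / (2 * \<sigma>) = 1 / (2 * \<epsilon>) - 1 / \<sigma>"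
    using assms(1,2) by (simp add: field_simps)
  moreover have "\<bar>x - \<mu>\<bar> / \<sigma> = 2 * (\<bar>x - \<mu>\<bar> / (2 * \<sigma>))"
    using assms(1) by simp
  ultimately have "- \<bar>x - \<mu>\<bar> / \<sigma> \<le> (1 / \<sigma> - 1 / (2 * \<epsilon>)) - (1 / (2 * \<sigma>)) * \<bar>x - \<mu>\<bar>"
    by simp
  then have "exp (- \<bar>x - \<mu>\<bar> / \<sigma>) \<le> exp (1 / \<sigma> - 1 / (2 * \<epsilon>)) * exp (- (1 / (2 * \<sigma>)) * \<bar>x - \<mu>\<bar>)"
    by (simp add: exp_add[symmetric] del: exp_add)
  then have "2 / \<sigma> * exp (- \<bar>x - \<mu>\<bar> / \<sigma>)
      \<le> 2 / \<sigma> * exp (1 / \<sigma> - 1 / (2 * \<epsilon>)) * exp (- (1 / (2 * \<sigma>)) * \<bar>x - \<mu>\<bar>)"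
    using assms(1) unfolding mult.assoc by (intro mult_left_mono) auto
  then show ?thesis
    using gev_density_gumbel_le[OF assms(1), of \<mu> x] by linarith
qed

lemma mass_outside_common_support_le_gumbel:
  fixes \<mu>0 \<sigma>0 \<epsilon> :: real
  assumes "0 < \<sigma>0" and "0 < \<epsilon>" and "\<epsilon> \<le> 1"
  shows "mass_outside_common_support (0, \<mu>0, \<sigma>0) \<epsilon> \<le> 8 * exp (1 / \<sigma>0 - 1 / (2 * \<epsilon>))"
proof -
  define H where "H = 2 / \<sigma>0 * exp (1 / \<sigma>0 - 1 / (2 * \<epsilon>))"
  let ?B = "{x. \<sigma>0 \<le> \<epsilon> * (2 + \<bar>x - \<mu>0\<bar>)}"
  have "0 \<le> H" unfolding H_def using assms(1) by simp
  show ?thesis unfolding mass_outside_common_support_def gev_measure_def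
  proof (rule measure_density_le[where B = ?B and g = "\<lambda>x. H * exp (- (1 / (2 * \<sigma>0)) * \<bar>x - \<mu>0\<bar>)"])
    show "UNIV - gev_common_support (0, \<mu>0, \<sigma>0) \<epsilon> \<subseteq> ?B"
      using margin_le_of_not_mem_gev_common_support[of _ 0 \<mu>0 \<sigma>0 \<epsilon>] assms(3) by auto
    show "gev_density (0, \<mu>0, \<sigma>0) x \<le> H * exp (- (1 / (2 * \<sigma>0)) * \<bar>x - \<mu>0\<bar>)" if "x \<in> ?B" for x
      using gev_density_gumbel_le_far[OF assms(1,2)] that unfolding H_def by simp
  next
    have "(\<integral>\<^sup>+x. ennreal (H * exp (- (1 / (2 * \<sigma>0)) * \<bar>x - \<mu>0\<bar>)) \<partial>lborel)
        = ennreal H * (\<integral>\<^sup>+x. ennreal (exp (- (1 / (2 * \<sigma>0)) * \<bar>x - \<mu>0\<bar>)) \<partial>lborel)"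
      using \<open>0 \<le> H\<close> by (simp add: ennreal_mult nn_integral_cmult)
    also have "\<dots> \<le> ennreal H * ennreal (4 * \<sigma>0)"
      using nn_integral_exp_neg_abs_le[of "1 / (2 * \<sigma>0)" \<mu>0] assms(1)
      by (intro mult_left_mono) auto
    also have "\<dots> = ennreal (8 * exp (1 / \<sigma>0 - 1 / (2 * \<epsilon>)))"
      using \<open>0 \<le> H\<close> assms(1) by (simp add: ennreal_mult[symmetric] H_def)
    finally show "(\<integral>\<^sup>+x. ennreal (H * exp (- (1 / (2 * \<sigma>0)) * \<bar>x - \<mu>0\<bar>)) \<partial>lborel)
        \<le> ennreal (8 * exp (1 / \<sigma>0 - 1 / (2 * \<epsilon>)))" .
    show "?B \<in> sets borel" by measurable
    show "0 \<le> 8 * exp (1 / \<sigma>0 - 1 / (2 * \<epsilon>))" by simp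
  qed (rule gev_density_measurable)
qed

lemma mass_outside_common_support_smallo_gumbel:
  fixes \<mu>0 \<sigma>0 :: real
  assumes "0 < \<sigma>0"
  shows "mass_outside_common_support (0, \<mu>0, \<sigma>0) \<in> o[at_right 0](\<lambda>\<epsilon>. \<epsilon> ^ 2)"
proof (rule smallo_of_eventually_le[where K = 1])
  show "eventually (\<lambda>\<epsilon>. norm (mass_outside_common_support (0, \<mu>0, \<sigma>0) \<epsilon>)
      \<le> 1 * (8 * exp (1 / \<sigma>0 - 1 / (2 * \<epsilon>)))) (at_right 0)"
    using mass_outside_common_support_le_gumbel[OF assms]
    by (intro eventually_at_rightI[of 0 1]) (auto simp: mass_outside_common_support_def)
  show "(\<lambda>\<epsilon>. 8 * exp (1 / \<sigma>0 - 1 / (2 * \<epsilon>))) \<in> o[at_right 0](\<lambda>\<epsilon>. \<epsilon> ^ 2)"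
    by real_asymp
qed

lemma mass_outside_common_support_smallo_neg_shape:
  fixes \<gamma>0 \<mu>0 \<sigma>0 :: real
  assumes "- 1 / 2 < \<gamma>0" and "\<gamma>0 < 0" and "0 < \<sigma>0"
  shows "mass_outside_common_support (\<gamma>0, \<mu>0, \<sigma>0) \<in> o[at_right 0](\<lambda>\<epsilon>. \<epsilon> ^ 2)"
proof -
  have q: "1 < - (\<gamma>0 + 1) / \<gamma>0" using assms(1,2) by (simp add: field_simps)
  have density: "gev_density (\<gamma>0, \<mu>0, \<sigma>0) x \<le>
      1 / \<sigma>0 * ((\<sigma>0 + \<gamma>0 * (x - \<mu>0)) / \<sigma>0) powr (- (\<gamma>0 + 1) / \<gamma>0)"
    if "0 < \<sigma>0 + \<gamma>0 * (x - \<mu>0)" for x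
    using assms(2,3) that by (rule gev_density_le_neg_shape)
  show ?thesis
    using assms(2,3) by (intro mass_outside_common_support_smallo_nonzero_shape[OF _ _ q _ density]) simp_all
qed

lemma mass_outside_common_support_smallo_pos_shape:
  fixes \<gamma>0 \<mu>0 \<sigma>0 :: real
  assumes "0 < \<gamma>0" and "0 < \<sigma>0"
  shows "mass_outside_common_support (\<gamma>0, \<mu>0, \<sigma>0) \<in> o[at_right 0](\<lambda>\<epsilon>. \<epsilon> ^ 2)"
proof -
  have density: "gev_density (\<gamma>0, \<mu>0, \<sigma>0) x \<le>
      fact (nat \<lceil>4 * \<gamma>0 + 1\<rceil>) / \<sigma>0 * ((\<sigma>0 + \<gamma>0 * (x - \<mu>0)) / \<sigma>0) powr 3"
    if "0 < \<sigma>0 + \<gamma>0 * (x - \<mu>0)" for x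
    using assms that by (rule gev_density_le_pos_shape)
  show ?thesis
    using assms by (intro mass_outside_common_support_smallo_nonzero_shape[OF _ _ _ _ density]) simp_all
qed

theorem lemmaE1:
  fixes \<gamma>0 \<mu>0 \<sigma>0 :: real
  assumes "\<gamma>0 > - 1 / 2" and "\<sigma>0 > 0"
  shows "(\<lambda>\<epsilon>. measure (gev_measure (\<gamma>0, \<mu>0, \<sigma>0))
             (UNIV - gev_common_support (\<gamma>0, \<mu>0, \<sigma>0) \<epsilon>))
         \<in> o[at_right 0](\<lambda>\<epsilon>. \<epsilon> ^ 2)"
proof -
  consider "\<gamma>0 < 0" | "\<gamma>0 = 0" | "0 < \<gamma>0" by linarith
  then have "mass_outside_common_support (\<gamma>0, \<mu>0, \<sigma>0) \<in> o[at_right 0](\<lambda>\<epsilon>. \<epsilon> ^ 2)"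
    using assms mass_outside_common_support_smallo_neg_shape mass_outside_common_support_smallo_gumbel
      mass_outside_common_support_smallo_pos_shape
    by cases simp_all
  then show ?thesis unfolding mass_outside_common_support_def .
qed

end
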